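(* Consider the system $x^+=f(x)$, $y=h(x)$ with $f:\mathcal{X}\to\mathcal{X}$, $h:\mathcal{X}\to\mathcal{Y}$, $\mathcal{X}\subset\mathbb{R}^n$, $\mathcal{Y}\subset\mathbb{R}^m$. Suppose: (A1) there exists an integer $p\ge1$ such that for every $x\in\mathcal{X}$ the set $[x]_{p-1}$ is either a singleton or empty; and (A2) for all $x,\hat x\in\mathcal{X}$ and all $k\in\{0,1,2,\ldots\}$, $\hat x\in[x]_k^+$ implies $[\hat x]_k^+=[x]_k^+$. Let $p$ be as in (A1) and define $\pi:\mathcal{X}\times\mathcal{Y}\to\{-1,0,1,\ldots,p-2\}$ by $$\pi(\hat x,y):=\max\{\,j\in\{-1,0,\ldots,p-2\}:\ [\hat x]_j^+\cap h^{-1}(y)\neq\emptyset\,\}.$$ Then the system $$\hat x^+\in f\big([\hat x]^+_{\pi(\hat x,y)}\cap h^{-1}(y)\big)$$ is a deadbeat observer for $x^+=f(x)$, $y=h(x)$.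
   Context: Inverse images are set-valued: $f^{-1}(x):=\{\eta\in\mathcal{X}: f(\eta)=x\}$ (empty if $x\notin f(\mathcal{X})$), $h^{-1}(y):=\{\eta\in\mathcal{X}:h(\eta)=y\}$; images of sets are $f(S)=\{f(s):s\in S\}$ and for a set $S$, $[S]_k:=\bigcup_{s\in S}[s]_k$. Define $[x]_0:=h^{-1}(h(x))$, and for $k\ge0$: $[x]_k^+:=f([f^{-1}(x)]_k)$, $[x]_{k+1}:=[x]_k^+\cap[x]_0$; additionally $[x]_{-1}^+:=\mathcal{X}$. Solutions: $\phi(0,x)=x$, $\phi(k+1,x)=f(\phi(k,x))$. Given $g:\mathcal{X}\times\mathcal{Y}\rightrightarrows\mathcal{X}$, a solution of $\hat x^+\in g(\hat x,h(x))$ driven by $x^+=f(x)$ is any sequence $\psi(k,\hat x,x)$ with $\psi(0,\hat x,x)=\hat x$, $\psi(k+1,\hat x,x)\in g(\psi(k,\hat x,x),h(\phi(k,x)))$. The system $\hat x^+\in g(\hat x,y)$ is a deadbeat observer if there is an integer $q\ge1$ such that all such solutions satisfy $\psi(k,\hat x,x)=\phi(k,x)$ for all $x,\hat x\in\mathcal{X}$ and $k\ge q$. *)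

theory Defs
  imports "HOL-Analysis.Analysis"
begin

text \<open>Indistinguishability sets, relativised to the state set X.
  cls X f h k x is [x]_k ; clsp X f h k x is [x]_k^+ (k >= 0).\<close>

fun cls :: "'a set \<Rightarrow> ('a \<Rightarrow> 'a) \<Rightarrow> ('a \<Rightarrow> 'b) \<Rightarrow> nat \<Rightarrow> 'a \<Rightarrow> 'a set" where
  "cls X f h 0 x = {\<eta>\<in>X. h \<eta> = h x}"
| "cls X f h (Suc k) x =
     (f ` (\<Union>s\<in>{\<eta>\<in>X. f \<eta> = x}. cls X f h k s)) \<inter> cls X f h 0 x"

definition clsp :: "'a set \<Rightarrow> ('a \<Rightarrow> 'a) \<Rightarrow> ('a \<Rightarrow> 'b) \<Rightarrow> nat \<Rightarrow> 'a \<Rightarrow> 'a set" where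
  "clsp X f h k x = f ` (\<Union>s\<in>{\<eta>\<in>X. f \<eta> = x}. cls X f h k s)"

definition clsp_int :: "'a set \<Rightarrow> ('a \<Rightarrow> 'a) \<Rightarrow> ('a \<Rightarrow> 'b) \<Rightarrow> int \<Rightarrow> 'a \<Rightarrow> 'a set" where
  "clsp_int X f h j x = (if j = -1 then X else clsp X f h (nat j) x)"

definition obs_index :: "'a set \<Rightarrow> ('a \<Rightarrow> 'a) \<Rightarrow> ('a \<Rightarrow> 'b) \<Rightarrow> nat \<Rightarrow> 'a \<Rightarrow> 'b \<Rightarrow> int" where
  "obs_index X f h p xh y =
     Max {j \<in> {-1 .. int p - 2}. clsp_int X f h j xh \<inter> {\<eta>\<in>X. h \<eta> = y} \<noteq> {}}"

definition observer_map :: "'a set \<Rightarrow> ('a \<Rightarrow> 'a) \<Rightarrow> ('a \<Rightarrow> 'b) \<Rightarrow> nat \<Rightarrow> 'a \<Rightarrow> 'b \<Rightarrow> 'a set" where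
  "observer_map X f h p xh y =
     f ` (clsp_int X f h (obs_index X f h p xh y) xh \<inter> {\<eta>\<in>X. h \<eta> = y})"

definition deadbeat_observer ::
  "'a set \<Rightarrow> ('a \<Rightarrow> 'a) \<Rightarrow> ('a \<Rightarrow> 'b) \<Rightarrow> ('a \<Rightarrow> 'b \<Rightarrow> 'a set) \<Rightarrow> bool" where
  "deadbeat_observer X f h g \<longleftrightarrow>
     (\<exists>q::nat. q \<ge> 1 \<and>
        (\<forall>x\<in>X. \<forall>xh\<in>X. \<forall>\<psi>::nat \<Rightarrow> 'a.
           (\<psi> 0 = xh \<and> (\<forall>k. \<psi> (Suc k) \<in> g (\<psi> k) (h ((f ^^ k) x))))
           \<longrightarrow> (\<forall>k\<ge>q. \<psi> k = (f ^^ k) x)))"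

end

theory Submission
  imports Defs
begin

(* Proof idea.  Write x_k = f^k(x) for the true trajectory and psi for an observer
   trajectory.  The key invariant is

       psi(k+1) = f(eta)  for some eta in [x_k]_{min(k, p-1)}.

   For k = 0 it only says that eta has the same output as x_0.  For the step, let
   j + 1 = min(k+1, p-1).  The invariant (and monotonicity in the index) puts psi(k+1)
   into [x_{k+1}]_j^+, so by (A2) the estimate and the true state have the same set
   [.]_j^+.  That set contains x_{k+1}, hence meets h^{-1}(y); by maximality the index
   pi chosen by the observer is at least j, and the observer picks its new point in
   [psi(k+1)]_j^+ = [x_{k+1}]_j^+ with the output of x_{k+1}, i.e. in [x_{k+1}]_{j+1}.
   Once k >= p-1 the invariant places eta in [x_k]_{p-1}, which contains x_k and is a
   singleton by (A1); so the estimate equals x_{k+1} from step p on. *)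

lemma cls_subset: "cls X f h k x \<subseteq> X"
  by (cases k) auto

lemma cls_Suc_eq: "cls X f h (Suc k) x = clsp X f h k x \<inter> cls X f h 0 x"
  by (simp add: clsp_def)

lemma clspI:
  assumes "s \<in> X" and "\<eta> \<in> cls X f h k s"
  shows "f \<eta> \<in> clsp X f h k (f s)"
  using assms unfolding clsp_def by (intro imageI UN_I[of s]) auto

lemma clsp_subset:
  assumes "\<forall>x\<in>X. f x \<in> X"
  shows "clsp X f h k x \<subseteq> X"
proof
  fix y
  assume "y \<in> clsp X f h k x"
  then obtain s t where "s \<in> cls X f h k t" and "y = f s"
    unfolding clsp_def by blast
  moreover from this(1) have "s \<in> X" by (rule subsetD[OF cls_subset])
  ultimately show "y \<in> X" using assms by simp
qed

lemma cls_Suc_subset: "cls X f h (Suc k) x \<subseteq> cls X f h k x"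
proof (induction k arbitrary: x)
  case 0
  then show ?case by auto
next
  case (Suc k)
  have "clsp X f h (Suc k) x \<subseteq> clsp X f h k x"
    unfolding clsp_def using Suc.IH by (intro image_mono UN_mono) auto
  then show ?case unfolding cls_Suc_eq[of X f h "Suc k"] cls_Suc_eq[of X f h k]
    by (rule Int_mono) simp
qed

lemma cls_antimono: "j \<le> i \<Longrightarrow> cls X f h i x \<subseteq> cls X f h j x"
proof (induction i)
  case 0
  then show ?case by simp
next
  case (Suc i)
  show ?case
  proof (cases "j = Suc i")
    case False
    then have "j \<le> i" using Suc.prems by simp
    then have "cls X f h i x \<subseteq> cls X f h j x" by (rule Suc.IH)
    then show ?thesis by (rule subset_trans[OF cls_Suc_subset])
  qed simp
qed

lemma clsp_antimono: "j \<le> i \<Longrightarrow> clsp X f h i x \<subseteq> clsp X f h j x"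
  unfolding clsp_def using cls_antimono[of j i X f h] by (intro image_mono UN_mono) auto

lemma orbit_in_X:
  assumes "x \<in> X" and "\<forall>x\<in>X. f x \<in> X"
  shows "(f ^^ k) x \<in> X"
  using assms by (induction k) auto

lemma orbit_in_own_cls:
  assumes x: "x \<in> X" and fX: "\<forall>x\<in>X. f x \<in> X"
  shows "j \<le> k \<Longrightarrow> (f ^^ k) x \<in> cls X f h j ((f ^^ k) x)"
proof (induction k arbitrary: j)
  case 0
  then show ?case using x by simp
next
  case (Suc k)
  have inX: "(f ^^ k) x \<in> X" "(f ^^ Suc k) x \<in> X"
    by (rule orbit_in_X[OF x fX])+
  show ?case
  proof (cases j)
    case 0
    then show ?thesis using inX by simp
  next
    case (Suc j')
    then have "j' \<le> k" using Suc.prems by simp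
    then have "(f ^^ k) x \<in> cls X f h j' ((f ^^ k) x)" by (rule Suc.IH)
    then have "f ((f ^^ k) x) \<in> clsp X f h j' (f ((f ^^ k) x))" by (rule clspI[OF inX(1)])
    then show ?thesis unfolding Suc cls_Suc_eq using inX(2) by simp
  qed
qed

lemma obs_index_ge:
  assumes "j + 2 \<le> p" and "clsp X f h j z \<inter> {\<eta>\<in>X. h \<eta> = y} \<noteq> {}"
  shows "clsp_int X f h (obs_index X f h p z y) z \<subseteq> clsp X f h j z"
proof -
  define S where "S = {j \<in> {-1 .. int p - 2}. clsp_int X f h j z \<inter> {\<eta>\<in>X. h \<eta> = y} \<noteq> {}}"
  have "finite S" unfolding S_def by (rule finite_subset[of _ "{-1..int p - 2}"]) auto
  moreover have "int j \<in> S" using assms unfolding S_def clsp_int_def by auto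
  ultimately have ge: "int j \<le> Max S" by simp
  have "obs_index X f h p z y = Max S"
    unfolding obs_index_def S_def by simp
  moreover have "Max S \<noteq> -1" using ge by simp
  ultimately have "clsp_int X f h (obs_index X f h p z y) z = clsp X f h (nat (Max S)) z"
    unfolding clsp_int_def by simp
  moreover have "j \<le> nat (Max S)" using ge by simp
  ultimately show ?thesis using clsp_antimono[of j "nat (Max S)" X f h z] by simp
qed

lemma observer_mapE:
  assumes "z' \<in> observer_map X f h p z y"
  obtains \<eta> where "z' = f \<eta>" and "\<eta> \<in> clsp_int X f h (obs_index X f h p z y) z"
    and "\<eta> \<in> X" and "h \<eta> = y"
proof -
  from assms obtain \<eta> where "z' = f \<eta>"
    and "\<eta> \<in> clsp_int X f h (obs_index X f h p z y) z \<inter> {\<eta>\<in>X. h \<eta> = y}"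
    unfolding observer_map_def by (rule imageE)
  then show ?thesis by (intro that[of \<eta>]) auto
qed

lemma observer_refines:
  assumes fX: "\<forall>x\<in>X. f x \<in> X"
    and A2: "\<forall>x\<in>X. \<forall>xh\<in>X. \<forall>k::nat. xh \<in> clsp X f h k x \<longrightarrow> clsp X f h k xh = clsp X f h k x"
    and jp: "j + 2 \<le> p" and x': "x' \<in> X"
    and z: "z \<in> clsp X f h j x'" and x'_own: "x' \<in> clsp X f h j x'"
    and \<eta>: "\<eta> \<in> clsp_int X f h (obs_index X f h p z (h x')) z" "\<eta> \<in> X" "h \<eta> = h x'"
  shows "\<eta> \<in> cls X f h (Suc j) x'"
proof -
  have "z \<in> X" by (rule subsetD[OF clsp_subset[OF fX] z])
  then have same: "clsp X f h j z = clsp X f h j x'"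
    using A2 x' z by blast
  then have "x' \<in> clsp X f h j z \<inter> {\<eta>\<in>X. h \<eta> = h x'}"
    using x'_own x' by simp
  then have "clsp X f h j z \<inter> {\<eta>\<in>X. h \<eta> = h x'} \<noteq> {}"
    by (rule ex_in_conv[THEN iffD1, OF exI])
  then have "\<eta> \<in> clsp X f h j z"
    by (rule subsetD[OF obs_index_ge[OF jp] \<eta>(1)])
  then show ?thesis unfolding cls_Suc_eq using same \<eta>(2,3) by simp
qed

lemma observer_invariant:
  assumes fX: "\<forall>x\<in>X. f x \<in> X"
    and A2: "\<forall>x\<in>X. \<forall>xh\<in>X. \<forall>k::nat. xh \<in> clsp X f h k x \<longrightarrow> clsp X f h k xh = clsp X f h k x"
    and x: "x \<in> X"
    and sol: "\<forall>k. \<psi> (Suc k) \<in> observer_map X f h p (\<psi> k) (h ((f ^^ k) x))"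
  shows "\<exists>\<eta>. \<psi> (Suc k) = f \<eta> \<and> \<eta> \<in> cls X f h (min k (p - 1)) ((f ^^ k) x)"
proof (induction k)
  case 0
  have "\<psi> (Suc 0) \<in> observer_map X f h p (\<psi> 0) (h x)"
    using sol[rule_format, of 0] by simp
  then obtain \<eta> where "\<psi> (Suc 0) = f \<eta>" "\<eta> \<in> X" "h \<eta> = h x"
    by (rule observer_mapE)
  then show ?case by auto
next
  case (Suc k)
  define xk where "xk = (f ^^ k) x"
  have xk: "xk \<in> X" "f xk \<in> X" "(f ^^ Suc k) x = f xk"
    using orbit_in_X[OF x fX, of k] fX unfolding xk_def by auto
  from Suc.IH obtain \<eta>0 where \<eta>0: "\<psi> (Suc k) = f \<eta>0" "\<eta>0 \<in> cls X f h (min k (p - 1)) xk"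
    unfolding xk_def by blast
  have "\<psi> (Suc (Suc k)) \<in> observer_map X f h p (\<psi> (Suc k)) (h (f xk))"
    using sol[rule_format, of "Suc k"] xk(3) by simp
  then obtain \<eta> where \<eta>: "\<psi> (Suc (Suc k)) = f \<eta>"
    "\<eta> \<in> clsp_int X f h (obs_index X f h p (\<psi> (Suc k)) (h (f xk))) (\<psi> (Suc k))"
    "\<eta> \<in> X" "h \<eta> = h (f xk)"
    by (rule observer_mapE)
  show ?case
  proof (cases "min (Suc k) (p - 1)")
    case 0
    have "\<eta> \<in> cls X f h 0 (f xk)" using \<eta>(3,4) by simp
    then show ?thesis unfolding 0 xk(3) using \<eta>(1) by (intro exI[of _ \<eta>] conjI)
  next
    case (Suc j)
    then have jk: "j \<le> min k (p - 1)" and jp: "j + 2 \<le> p" by auto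
    have "xk \<in> cls X f h j xk"
      using orbit_in_own_cls[OF x fX, of j k] jk unfolding xk_def by simp
    then have own: "f xk \<in> clsp X f h j (f xk)"
      by (rule clspI[OF xk(1)])
    have "\<psi> (Suc k) \<in> clsp X f h j (f xk)"
      using subsetD[OF clsp_antimono[OF jk] clspI[OF xk(1) \<eta>0(2)]] \<eta>0(1) by simp
    then have "\<eta> \<in> cls X f h (Suc j) (f xk)"
      by (rule observer_refines[OF fX A2 jp xk(2) _ own \<eta>(2-4)])
    then show ?thesis unfolding Suc xk(3) using \<eta>(1) by (intro exI[of _ \<eta>] conjI)
  qed
qed

theorem theorem3:
  fixes X :: "(real ^ 'n) set" and Y :: "(real ^ 'm) set"
    and f :: "real ^ 'n \<Rightarrow> real ^ 'n" and h :: "real ^ 'n \<Rightarrow> real ^ 'm"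
    and p :: nat
  assumes f_into: "\<forall>x\<in>X. f x \<in> X"
    and h_into: "\<forall>x\<in>X. h x \<in> Y"
    and p_ge: "p \<ge> 1"
    and A1: "\<forall>x\<in>X. (\<exists>a. cls X f h (p - 1) x = {a}) \<or> cls X f h (p - 1) x = {}"
    and A2: "\<forall>x\<in>X. \<forall>xh\<in>X. \<forall>k::nat.
               xh \<in> clsp X f h k x \<longrightarrow> clsp X f h k xh = clsp X f h k x"
  shows "deadbeat_observer X f h (observer_map X f h p)"
  unfolding deadbeat_observer_def
proof (intro exI[of _ p] conjI ballI allI impI)
  show "1 \<le> p" by (rule p_ge)
  fix x xh and \<psi> :: "nat \<Rightarrow> real ^ 'n" and k
  assume x: "x \<in> X"
    and sol: "\<psi> 0 = xh \<and> (\<forall>k. \<psi> (Suc k) \<in> observer_map X f h p (\<psi> k) (h ((f ^^ k) x)))"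
    and kp: "p \<le> k"
  obtain k' where k': "k = Suc k'" and "p - 1 \<le> k'"
    using kp p_ge by (cases k) auto
  obtain \<eta> where \<eta>: "\<psi> (Suc k') = f \<eta>" "\<eta> \<in> cls X f h (min k' (p - 1)) ((f ^^ k') x)"
    using observer_invariant[OF f_into A2 x sol[THEN conjunct2]] by blast
  have "\<eta> \<in> cls X f h (p - 1) ((f ^^ k') x)"
    using \<eta>(2) \<open>p - 1 \<le> k'\<close> by (simp add: min.absorb2)
  moreover have "(f ^^ k') x \<in> cls X f h (p - 1) ((f ^^ k') x)"
    using orbit_in_own_cls[OF x f_into] \<open>p - 1 \<le> k'\<close> .
  ultimately have "\<eta> = (f ^^ k') x"
    using A1[rule_format, OF orbit_in_X[OF x f_into, of k']] by (metis empty_iff singletonD)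
  then show "\<psi> k = (f ^^ k) x"
    unfolding k' using \<eta>(1) by simp
qed

end
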